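(* Let $T$ be a code tree for $\mathcal S$ as in the context, with $1/2\le P_R<1$, let $N\ge 2$ and $k=\lceil \lg N\rceil$, and let $L^{(\mathrm I)}_N$ be the average code length of the Type-I AEDS with $N$ states built on $T$. Then $$L_T-L^{(\mathrm I)}_N=\frac{1-P_R^{N-1}}{1-P_R^{N}}\,P_R+\frac{1-P_R^{\,2^k-N}}{1-P_R^{N}}\,(1-P_R)-k(1-P_R),$$ so the reduction $\delta^{(\mathrm I)}_N(P_R):=[L_T-L^{(\mathrm I)}_N]_0$ equals the positive part of this expression, where $[u]_0=\max\{u,0\}$. In particular $\delta^{(\mathrm I)}_2(P_R)=\left[\frac{P_R^2+P_R-1}{1+P_R}\right]_0$, which is positive whenever $P_R>\omega^{(\mathrm I)}:=(\sqrt5-1)/2\approx0.6180$.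
   Context: Let $\mathcal S$ be a finite alphabet with $|\mathcal S|\ge 2$ and $p=\{p(s)\}_{s\in\mathcal S}$ a probability distribution with $p(s)>0$ for all $s$ (symbols are i.i.d. with law $p$). Let $\mathcal B=\{0,1\}^*$ be the set of finite binary words (including the empty word), $l(\beta)$ the length of $\beta$, and $\lg=\log_2$. An AEDS (asymmetric encoding–decoding scheme) with finite state set $\mathcal X$, $|\mathcal X|=N$, consists of maps $E_{\hat x}:\mathcal S\to\mathcal B$ and $F^-_{\hat x}:\mathcal S\to\mathcal X$ for each $\hat x\in\mathcal X$ such that, for every $x\in\mathcal X$, the words $E_{\hat x}(s)$ over all pairs $(\hat x,s)$ with $F^-_{\hat x}(s)=x$ are pairwise distinct and form a prefix-free set $\mathcal B^{(D)}_x$. (A sequence is encoded backward: from state $\hat x_t$ output $E_{\hat x_t}(s_t)$ and move to $F^-_{\hat x_t}(s_t)$.) The state chain is the Markov chain on $\mathcal X$ moving from $\hat x$ to $F^-_{\hat x}(s)$ with probability $p(s)$. For a stationary distribution $Q$ of this chain (unique when the chain is irreducible), the average code length is $L=\sum_{\hat x\in\mathcal X}\sum_{s\in\mathcal S}p(s)Q(\hat x)\,l(E_{\hat x}(s))$. Code tree: $T$ is a binary prefix-free code for $\mathcal S$ with codeword $c_T(s)$ of length $l_T(s)\ge1$, and $L_T=\sum_s p(s)l_T(s)$. $\mathcal S_R$ (resp. $\mathcal S_L$) is the set of symbols whose codeword starts in the right (resp. left) subtree of the root; both are assumed nonempty; $P_R=\sum_{s\in\mathcal S_R}p(s)$, $P_L=1-P_R$,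 labeled so that $P_R\ge 1/2$. For $s\in\mathcal S_R$ (resp. $\mathcal S_L$), $t_R(s)$ (resp. $t_L(s)$) is $c_T(s)$ with its first bit deleted. Type-I AEDS with $N\ge2$ states $\alpha_1,\dots,\alpha_N$ built on $T$: let $k=\lceil\lg N\rceil$ and let $\pi_1,\dots,\pi_N$ be a prefix-free set of binary words with $l(\pi_j)=k-1$ for $1\le j\le 2^k-N$ and $l(\pi_j)=k$ for $2^k-N<j\le N$. For $s\in\mathcal S_R$: $F^-_{\alpha_j}(s)=\alpha_{j+1}$, $E_{\alpha_j}(s)=t_R(s)$ for $1\le j\le N-1$, and $F^-_{\alpha_N}(s)=\alpha_1$, $E_{\alpha_N}(s)=0\,t_R(s)$. For $s\in\mathcal S_L$ and every $j$: $F^-_{\alpha_j}(s)=\alpha_1$, $E_{\alpha_j}(s)=1\,\pi_j\,t_L(s)$ (concatenation). Its state chain is irreducible and aperiodic, so $Q$ is unique. *)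

theory Defs
  imports Complex_Main "HOL-Library.Sublist"
begin

text \<open>Binary words are \<open>bool list\<close>; bit 0 is False, bit 1 is True.
 A code tree for the alphabet (a finite type 's) is a map c :: 's \<Rightarrow> bool list,
 prefix-free, with all codewords of length at least 1.  The bit \<open>rb\<close> marks the
 right subtree of the root: S_R = {s. hd (c s) = rb}, S_L = its complement.\<close>

definition code_tree :: "('s \<Rightarrow> bool list) \<Rightarrow> bool" where
  "code_tree c \<longleftrightarrow> (\<forall>s. length (c s) \<ge> 1) \<and>
     (\<forall>s t. s \<noteq> t \<longrightarrow> \<not> prefix (c s) (c t))"

definition S_R :: "('s \<Rightarrow> bool list) \<Rightarrow> bool \<Rightarrow> 's set" where
  "S_R c rb = {s. hd (c s) = rb}"

definition S_L :: "('s \<Rightarrow> bool list) \<Rightarrow> bool \<Rightarrow> 's set" where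
  "S_L c rb = {s. hd (c s) \<noteq> rb}"

definition P_R :: "('s::finite \<Rightarrow> real) \<Rightarrow> ('s \<Rightarrow> bool list) \<Rightarrow> bool \<Rightarrow> real" where
  "P_R p c rb = (\<Sum>s\<in>S_R c rb. p s)"

definition L_T :: "('s::finite \<Rightarrow> real) \<Rightarrow> ('s \<Rightarrow> bool list) \<Rightarrow> real" where
  "L_T p c = (\<Sum>s\<in>UNIV. p s * real (length (c s)))"

definition kN :: "nat \<Rightarrow> nat" where
  "kN N = nat \<lceil>log 2 (real N)\<rceil>"

definition admissible_pi :: "nat \<Rightarrow> (nat \<Rightarrow> bool list) \<Rightarrow> bool" where
  "admissible_pi N \<pi> \<longleftrightarrow>
     (\<forall>i\<in>{1..N}. \<forall>j\<in>{1..N}. i \<noteq> j \<longrightarrow> \<not> prefix (\<pi> i) (\<pi> j)) \<and>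
     (\<forall>j\<in>{1..N}. length (\<pi> j) = (if j \<le> 2 ^ kN N - N then kN N - 1 else kN N))"

text \<open>Type-I AEDS on states alpha_1..alpha_N, represented by the indices 1..N.\<close>
definition typeI_E :: "nat \<Rightarrow> (nat \<Rightarrow> bool list) \<Rightarrow> ('s \<Rightarrow> bool list) \<Rightarrow> bool
    \<Rightarrow> nat \<Rightarrow> 's \<Rightarrow> bool list" where
  "typeI_E N \<pi> c rb j s =
     (if s \<in> S_R c rb then (if j < N then tl (c s) else False # tl (c s))
      else True # \<pi> j @ tl (c s))"

definition typeI_F :: "nat \<Rightarrow> ('s \<Rightarrow> bool list) \<Rightarrow> bool \<Rightarrow> nat \<Rightarrow> 's \<Rightarrow> nat" where
  "typeI_F N c rb j s =
     (if s \<in> S_R c rb then (if j < N then j + 1 else 1) else 1)"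

text \<open>Stationary distribution of the state chain (moving from x to F x s with prob. p s).\<close>
definition stationary :: "nat \<Rightarrow> ('s::finite \<Rightarrow> real) \<Rightarrow> (nat \<Rightarrow> 's \<Rightarrow> nat)
    \<Rightarrow> (nat \<Rightarrow> real) \<Rightarrow> bool" where
  "stationary N p F Q \<longleftrightarrow>
     (\<forall>x\<in>{1..N}. Q x \<ge> 0) \<and> (\<Sum>x=1..N. Q x) = 1 \<and>
     (\<forall>y\<in>{1..N}. Q y = (\<Sum>x=1..N. Q x * (\<Sum>s\<in>{s. F x s = y}. p s)))"

definition avg_len :: "nat \<Rightarrow> ('s::finite \<Rightarrow> real) \<Rightarrow> (nat \<Rightarrow> 's \<Rightarrow> bool list)
    \<Rightarrow> (nat \<Rightarrow> real) \<Rightarrow> real" where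
  "avg_len N p E Q = (\<Sum>x=1..N. \<Sum>s\<in>UNIV. p s * Q x * real (length (E x s)))"

end

theory Submission
  imports Defs
begin

text \<open>From a state \<open>\<alpha>\<^sub>j\<close> with \<open>j < N\<close> a symbol of \<open>S\<^sub>R\<close> costs one bit less than in \<open>T\<close>,
  while from any state \<open>\<alpha>\<^sub>j\<close> a symbol of \<open>S\<^sub>L\<close> costs \<open>l(\<pi>\<^sub>j)\<close> bits more. Hence
  \<open>L\<^sub>T - L = P\<^sub>R Q(\<alpha>\<^sub>1..\<alpha>\<^sub>N\<^sub>-\<^sub>1) - P\<^sub>L \<Sum>\<^sub>j Q(\<alpha>\<^sub>j) l(\<pi>\<^sub>j)\<close>.
  The state chain advances \<open>\<alpha>\<^sub>j \<rightarrow> \<alpha>\<^sub>j\<^sub>+\<^sub>1\<close> with probability \<open>P\<^sub>R\<close> and otherwise returns to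
  \<open>\<alpha>\<^sub>1\<close>, so its stationary distribution is geometric, \<open>Q(\<alpha>\<^sub>j) \<propto> P\<^sub>R\<^sup>j\<^sup>-\<^sup>1\<close>, and both
  sums become partial geometric sums: the second one is \<open>k - Q(\<alpha>\<^sub>1..\<alpha>\<^sub>M)\<close> with
  \<open>M = 2\<^sup>k - N\<close>, because exactly the first \<open>M\<close> words \<open>\<pi>\<^sub>j\<close> are one bit shorter than \<open>k\<close>.\<close>

lemma kN_2: "kN 2 = 1"
  by (simp add: kN_def)

lemma kN_bounds:
  assumes "N \<ge> 2"
  shows "1 \<le> kN N" and "N \<le> 2 ^ kN N" and "2 ^ kN N < 2 * N"
proof -
  define k where "k = kN N"
  have "log 2 (real N) > 0" using assms by simp
  then have k: "real k = of_int \<lceil>log 2 (real N)\<rceil>" unfolding k_def kN_def by simp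
  then have "log 2 (real N) \<le> real k" and "real k - 1 < log 2 (real N)" by linarith+
  then have "real N \<le> 2 powr real k" and "2 powr (real k - 1) < real N"
    using assms by (simp_all add: log_le_iff less_log_iff)
  then have "real N \<le> 2 ^ k" and "2 ^ k < 2 * real N"
    by (simp_all add: powr_diff powr_realpow)
  then have "real N \<le> real (2 ^ k)" and "real (2 ^ k) < real (2 * N)"
    by simp_all
  then have "N \<le> 2 ^ k" and "2 ^ k < 2 * N"
    by (simp_all only: of_nat_le_iff of_nat_less_iff)
  moreover have "1 \<le> k" using \<open>log 2 (real N) > 0\<close> k by linarith
  ultimately show "1 \<le> kN N" and "N \<le> 2 ^ kN N" and "2 ^ kN N < 2 * N"
    unfolding k_def by simp_all
qed

lemma geometric_of_ratio_recurrence: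
  fixes f :: "nat \<Rightarrow> 'a::monoid_mult"
  assumes "\<And>y. 2 \<le> y \<Longrightarrow> y \<le> n \<Longrightarrow> f y = f (y - 1) * r"
  shows "Suc j \<le> n \<Longrightarrow> f (Suc j) = f 1 * r ^ j"
proof (induction j)
  case 0
  then show ?case by simp
next
  case (Suc j)
  then show ?case using assms[of "Suc (Suc j)"] by (simp add: mult.assoc power_commutes)
qed

lemma typeI_stationary_ratio:
  assumes "stationary N p (typeI_F N c rb) Q" and "2 \<le> y" and "y \<le> N"
  shows "Q y = Q (y - 1) * P_R p c rb"
proof -
  have preimage: "{s. typeI_F N c rb x s = y} = (if x = y - 1 then S_R c rb else {})"
    if "x \<in> {1..N}" for x
    using that assms(2,3) unfolding typeI_F_def by auto
  have "Q y = (\<Sum>x=1..N. Q x * (\<Sum>s\<in>{s. typeI_F N c rb x s = y}. p s))"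
    using assms unfolding stationary_def by auto
  also have "\<dots> = (\<Sum>x=1..N. if x = y - 1 then Q x * P_R p c rb else 0)"
    by (intro sum.cong refl) (simp add: preimage P_R_def)
  also have "\<dots> = Q (y - 1) * P_R p c rb"
    using assms(2,3) by (subst sum.delta) auto
  finally show ?thesis .
qed

lemma typeI_stationary_partial_sum:
  assumes stat: "stationary N p (typeI_F N c rb) Q"
    and "P_R p c rb \<noteq> 1" and "m \<le> N"
  shows "(\<Sum>x=1..m. Q x) = (1 - P_R p c rb ^ m) / (1 - P_R p c rb ^ N)"
proof -
  define r where "r = P_R p c rb"
  have "r \<noteq> 1" using assms(2) r_def by simp
  have Q_Suc: "Q (Suc j) = Q 1 * r ^ j" if "Suc j \<le> N" for j
    using geometric_of_ratio_recurrence[of N Q r, OF _ that] typeI_stationary_ratio[OF stat]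
    unfolding r_def by blast
  have geometric: "(\<Sum>x=1..n. Q x) = Q 1 * ((1 - r ^ n) / (1 - r))" if "n \<le> N" for n
  proof -
    have "(\<Sum>x=1..n. Q x) = (\<Sum>j<n. Q (Suc j))"
      by (simp add: sum.atLeast1_atMost_eq)
    also have "\<dots> = (\<Sum>j<n. Q 1 * r ^ j)"
      using that by (intro sum.cong refl Q_Suc) simp
    finally show ?thesis
      using \<open>r \<noteq> 1\<close> by (simp add: sum_distrib_left[symmetric] sum_gp_strict)
  qed
  have total: "Q 1 * ((1 - r ^ N) / (1 - r)) = 1"
    using geometric[of N] stat unfolding stationary_def by (metis order_refl)
  then have "1 - r ^ N \<noteq> 0" by (metis div_0 mult_zero_right zero_neq_one)
  with total have "Q 1 = (1 - r) / (1 - r ^ N)"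
    using \<open>r \<noteq> 1\<close> by (simp add: field_simps)
  then show ?thesis
    using geometric[OF \<open>m \<le> N\<close>] \<open>r \<noteq> 1\<close> by (simp add: r_def)
qed

lemma typeI_codeword_length:
  assumes "code_tree c"
  shows "real (length (typeI_E N \<pi> c rb x s)) = real (length (c s))
    + (if s \<in> S_R c rb then (if x < N then -1 else 0) else real (length (\<pi> x)))"
proof -
  have "length (c s) \<ge> 1" using assms unfolding code_tree_def by auto
  then show ?thesis unfolding typeI_E_def by auto
qed

lemma sum_Compl_S_R:
  fixes p :: "'a::finite \<Rightarrow> real"
  assumes "(\<Sum>s\<in>UNIV. p s) = 1"
  shows "(\<Sum>s\<in>- S_R c rb. p s) = 1 - P_R p c rb"
  using assms sum.subset_diff[of "S_R c rb" UNIV p]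
  unfolding P_R_def by (simp add: Compl_eq_Diff_UNIV)

lemma sum_mult_if_mem:
  fixes p :: "'a::finite \<Rightarrow> 'b::comm_ring"
  shows "(\<Sum>s\<in>UNIV. p s * (if s \<in> A then a else b)) = sum p A * a + sum p (- A) * b"
  by (simp add: if_distrib sum.If_cases Compl_eq sum_distrib_right)

lemma typeI_expected_codeword_length:
  fixes p :: "'a::finite \<Rightarrow> real"
  assumes "(\<Sum>s\<in>UNIV. p s) = 1" and "code_tree c"
  shows "(\<Sum>s\<in>UNIV. p s * real (length (typeI_E N \<pi> c rb x s)))
    = L_T p c - (if x < N then P_R p c rb else 0) + (1 - P_R p c rb) * real (length (\<pi> x))"
  unfolding typeI_codeword_length[OF assms(2)] L_T_def
  by (simp add: distrib_left sum.distrib sum_mult_if_mem sum_Compl_S_R[OF assms(1)] P_R_def)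

lemma typeI_length_reduction_any_distribution:
  fixes p :: "'a::finite \<Rightarrow> real"
  assumes "(\<Sum>s\<in>UNIV. p s) = 1" and "code_tree c" and "(\<Sum>x=1..N. Q x) = 1" and "N \<ge> 1"
  shows "L_T p c - avg_len N p (typeI_E N \<pi> c rb) Q
    = P_R p c rb * (\<Sum>x=1..N-1. Q x) - (1 - P_R p c rb) * (\<Sum>x=1..N. Q x * real (length (\<pi> x)))"
proof -
  define r where "r = P_R p c rb"
  have per_state: "(\<Sum>s\<in>UNIV. p s * Q x * real (length (typeI_E N \<pi> c rb x s)))
      = L_T p c * Q x - r * (if x < N then Q x else 0) + (1 - r) * (Q x * real (length (\<pi> x)))" for x
  proof -
    have "(\<Sum>s\<in>UNIV. p s * Q x * real (length (typeI_E N \<pi> c rb x s)))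
        = Q x * (\<Sum>s\<in>UNIV. p s * real (length (typeI_E N \<pi> c rb x s)))"
      by (simp add: sum_distrib_left ac_simps)
    also have "\<dots> = Q x * (L_T p c - (if x < N then r else 0) + (1 - r) * real (length (\<pi> x)))"
      by (simp only: typeI_expected_codeword_length[OF assms(1,2)] r_def)
    also have "\<dots> = L_T p c * Q x - r * (if x < N then Q x else 0) + (1 - r) * (Q x * real (length (\<pi> x)))"
      by (simp add: algebra_simps)
    finally show ?thesis .
  qed
  have "avg_len N p (typeI_E N \<pi> c rb) Q
      = (\<Sum>x=1..N. L_T p c * Q x - r * (if x < N then Q x else 0) + (1 - r) * (Q x * real (length (\<pi> x))))"
    by (simp only: avg_len_def per_state)
  also have "\<dots> = L_T p c - r * (\<Sum>x=1..N-1. Q x) + (1 - r) * (\<Sum>x=1..N. Q x * real (length (\<pi> x)))"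
  proof -
    have "{x \<in> {1..N}. x < N} = {1..N-1}" using assms(4) by auto
    then show ?thesis using assms(3)
      by (simp add: sum.distrib sum_subtractf sum_distrib_left[symmetric] sum.inter_filter[symmetric])
  qed
  finally show ?thesis unfolding r_def by simp
qed

lemma admissible_pi_weighted_length:
  assumes "admissible_pi N \<pi>" and "N \<ge> 2" and "(\<Sum>x=1..N. Q x) = 1"
  shows "(\<Sum>x=1..N. Q x * real (length (\<pi> x))) = real (kN N) - (\<Sum>x=1..2 ^ kN N - N. Q x)"
proof -
  define k where "k = kN N"
  define M where "M = 2 ^ k - N"
  have "1 \<le> k" and "M \<le> N"
    using kN_bounds[OF assms(2)] unfolding k_def M_def by auto
  have "(\<Sum>x=1..N. Q x * real (length (\<pi> x)))
      = (\<Sum>x=1..N. real k * Q x - (if x \<le> M then Q x else 0))"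
    using assms(1) \<open>1 \<le> k\<close> unfolding admissible_pi_def k_def M_def
    by (intro sum.cong refl) (auto simp: algebra_simps)
  also have "\<dots> = real k - (\<Sum>x\<in>{x\<in>{1..N}. x \<le> M}. Q x)"
    unfolding sum_subtractf sum_distrib_left[symmetric] assms(3)
      sum.inter_filter[OF finite_atLeastAtMost] by simp
  also have "{x\<in>{1..N}. x \<le> M} = {1..M}" using \<open>M \<le> N\<close> by auto
  finally show ?thesis unfolding k_def M_def .
qed

lemma typeI_length_reduction:
  fixes p :: "'a::finite \<Rightarrow> real"
  assumes "(\<Sum>s\<in>UNIV. p s) = 1" and "code_tree c" and "P_R p c rb \<noteq> 1" and "N \<ge> 2"
    and "admissible_pi N \<pi>" and stat: "stationary N p (typeI_F N c rb) Q"
  shows "L_T p c - avg_len N p (typeI_E N \<pi> c rb) Q =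
           (1 - P_R p c rb ^ (N - 1)) / (1 - P_R p c rb ^ N) * P_R p c rb
         + (1 - P_R p c rb ^ (2 ^ kN N - N)) / (1 - P_R p c rb ^ N) * (1 - P_R p c rb)
         - real (kN N) * (1 - P_R p c rb)"
proof -
  define r where "r = P_R p c rb"
  define M where "M = 2 ^ kN N - N"
  have total: "(\<Sum>x=1..N. Q x) = 1" using stat unfolding stationary_def by blast
  have "M \<le> N" using kN_bounds[OF assms(4)] unfolding M_def by simp
  have "L_T p c - avg_len N p (typeI_E N \<pi> c rb) Q
      = r * (\<Sum>x=1..N-1. Q x) - (1 - r) * (\<Sum>x=1..N. Q x * real (length (\<pi> x)))"
    using typeI_length_reduction_any_distribution[OF assms(1,2) total] assms(4)
    unfolding r_def by simp
  also have "\<dots> = r * ((1 - r ^ (N - 1)) / (1 - r ^ N))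
      - (1 - r) * (real (kN N) - (1 - r ^ M) / (1 - r ^ N))"
    unfolding admissible_pi_weighted_length[OF assms(5,4) total] M_def[symmetric] r_def
      typeI_stationary_partial_sum[OF stat assms(3) \<open>M \<le> N\<close>]
      typeI_stationary_partial_sum[OF stat assms(3) diff_le_self]
    ..
  also have "\<dots> = (1 - r ^ (N - 1)) / (1 - r ^ N) * r + (1 - r ^ M) / (1 - r ^ N) * (1 - r)
      - real (kN N) * (1 - r)"
    by (simp add: algebra_simps)
  finally show ?thesis unfolding r_def M_def .
qed

lemma typeI_length_reduction_two_states:
  fixes r :: real
  assumes "r \<noteq> 1" and "r \<noteq> -1"
  shows "(1 - r) / (1 - r ^ 2) * r - (1 - r) = (r ^ 2 + r - 1) / (1 + r)"
proof -
  have factor: "1 - r ^ 2 = (1 - r) * (1 + r)" by (simp add: power2_eq_square algebra_simps)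
  have "1 + r \<noteq> 0" and "1 - r \<noteq> 0" using assms by (auto simp: add_eq_0_iff)
  then have "(1 - r) / (1 - r ^ 2) * r = r / (1 + r)"
    unfolding factor by simp
  moreover have "r / (1 + r) - (1 - r) = (r ^ 2 + r - 1) / (1 + r)"
    using \<open>1 + r \<noteq> 0\<close> by (simp add: field_simps power2_eq_square)
  ultimately show ?thesis by simp
qed

lemma golden_quadratic_pos:
  fixes r :: real
  assumes "r > (sqrt 5 - 1) / 2"
  shows "(r ^ 2 + r - 1) / (1 + r) > 0"
proof -
  define a where "a = (sqrt 5 - 1) / 2"
  have "a * a + a - 1 = 0" unfolding a_def by (simp add: field_simps)
  then have factor: "r ^ 2 + r - 1 = (r - a) * (r + a + 1)"
    by (simp add: power2_eq_square algebra_simps)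
  have "a > 0" unfolding a_def by (simp add: real_less_rsqrt)
  with assms show ?thesis unfolding factor a_def[symmetric] by simp
qed

theorem theorem1:
  fixes p :: "'a::finite \<Rightarrow> real" and c :: "'a \<Rightarrow> bool list" and rb :: bool
    and N :: nat and \<pi> :: "nat \<Rightarrow> bool list" and Q :: "nat \<Rightarrow> real"
  assumes "card (UNIV :: 'a set) \<ge> 2"
    and "\<forall>s. p s > 0" and "(\<Sum>s\<in>UNIV. p s) = 1"
    and "code_tree c"
    and "S_R c rb \<noteq> {}" and "S_L c rb \<noteq> {}"
    and "1/2 \<le> P_R p c rb" and "P_R p c rb < 1"
    and "N \<ge> 2"
    and "admissible_pi N \<pi>"
    and "stationary N p (typeI_F N c rb) Q"
  shows "L_T p c - avg_len N p (typeI_E N \<pi> c rb) Q =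
           (1 - P_R p c rb ^ (N - 1)) / (1 - P_R p c rb ^ N) * P_R p c rb
         + (1 - P_R p c rb ^ (2 ^ kN N - N)) / (1 - P_R p c rb ^ N) * (1 - P_R p c rb)
         - real (kN N) * (1 - P_R p c rb)
    \<and> (N = 2 \<longrightarrow>
         max (L_T p c - avg_len N p (typeI_E N \<pi> c rb) Q) 0
           = max ((P_R p c rb ^ 2 + P_R p c rb - 1) / (1 + P_R p c rb)) 0
       \<and> (P_R p c rb > (sqrt 5 - 1) / 2 \<longrightarrow>
            max (L_T p c - avg_len N p (typeI_E N \<pi> c rb) Q) 0 > 0))"
proof -
  have "P_R p c rb \<noteq> 1" and "P_R p c rb \<noteq> -1"
    using assms(7,8) by auto
  note reduction = typeI_length_reduction[OF assms(3,4) \<open>P_R p c rb \<noteq> 1\<close> assms(9,10,11)]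
  have "L_T p c - avg_len N p (typeI_E N \<pi> c rb) Q
      = (P_R p c rb ^ 2 + P_R p c rb - 1) / (1 + P_R p c rb)" if "N = 2"
    using reduction typeI_length_reduction_two_states[OF \<open>P_R p c rb \<noteq> 1\<close> \<open>P_R p c rb \<noteq> -1\<close>]
    unfolding that kN_2 by simp
  with reduction show ?thesis
    using golden_quadratic_pos by auto
qed

end
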